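(* Let $1<p<\infty$. The functions $x(\theta)=\cos_p\theta$, $y(\theta)=\sin_p\theta$ are the solution of the system \[ \frac{dx}{d\theta}=-|y|^{p-1}\operatorname{sgn}y,\qquad \frac{dy}{d\theta}=|x|^{p-1}\operatorname{sgn}x,\qquad x(0)=1,\ y(0)=0. \] Moreover, with $pq=p+q$ and $\theta^\circ=\varphi_q^{-1}(\varphi_p(\theta))$, one has $\frac{d}{d\theta}\cos_p\theta=-\sin_q\theta^\circ$ and $\frac{d}{d\theta}\sin_p\theta=\cos_q\theta^\circ$.
   Context: Let $B(x;a,b)=\int_0^xt^{a-1}(1-t)^{b-1}dt$, $\mathbb{S}_p=4\Gamma^2(1+\frac1p)/\Gamma(1+\frac2p)$, and for $\varphi\in\mathbb{R}$ with $k=\lfloor4\varphi/\pi\rfloor$ put $\Theta_p(\varphi)=\frac{k-\lfloor k/2\rfloor}{2}\mathbb{S}_p+(-1)^k\frac1p4^{-1/p}B(\sin^22\varphi;\frac1p,\frac12)$; $\Theta_p$ is a strictly increasing bijection of $\mathbb{R}$, $\varphi_p=\Theta_p^{-1}$, $\cos_p\theta=|\cos\varphi_p(\theta)|^{2/p}\operatorname{sgn}\cos\varphi_p(\theta)$, $\sin_p\theta=|\sin\varphi_p(\theta)|^{2/p}\operatorname{sgn}\sin\varphi_p(\theta)$; the same definitions with $q$ in place of $p$ give $\varphi_q,\cos_q,\sin_q$. *)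

theory Defs
  imports "HOL-Analysis.Analysis"
begin

definition incBeta :: "real \<Rightarrow> real \<Rightarrow> real \<Rightarrow> real" where
  "incBeta x a b = integral {0..x} (\<lambda>t. t powr (a - 1) * (1 - t) powr (b - 1))"

definition SS :: "real \<Rightarrow> real" where
  "SS p = 4 * (Gamma (1 + 1 / p))\<^sup>2 / Gamma (1 + 2 / p)"

definition Theta :: "real \<Rightarrow> real \<Rightarrow> real" where
  "Theta p \<phi> = (let k = \<lfloor>4 * \<phi> / pi\<rfloor> in
     real_of_int (k - \<lfloor>real_of_int k / 2\<rfloor>) / 2 * SS p
     + ((-1) powi k) * (1 / p) * 4 powr (- 1 / p) * incBeta ((sin (2 * \<phi>))\<^sup>2) (1 / p) (1 / 2))"

definition phi :: "real \<Rightarrow> real \<Rightarrow> real" where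
  "phi p = inv (Theta p)"

definition cosp :: "real \<Rightarrow> real \<Rightarrow> real" where
  "cosp p \<theta> = \<bar>cos (phi p \<theta>)\<bar> powr (2 / p) * sgn (cos (phi p \<theta>))"

definition sinp :: "real \<Rightarrow> real \<Rightarrow> real" where
  "sinp p \<theta> = \<bar>sin (phi p \<theta>)\<bar> powr (2 / p) * sgn (sin (phi p \<theta>))"

end

theory Submission
  imports Defs
begin

text \<open>
  On each cell \<open>[k pi/4, (k+1) pi/4]\<close> the function \<open>Theta p\<close> is the smooth branch
  \<open>Theta_branch p k\<close>. Consecutive branches agree at their common endpoint because
  \<open>(1/p) 4^(-1/p) B(1/p, 1/2) = S_p / 4\<close> by Legendre's duplication formula, and inside a cell
  \<open>Theta' = (2/p) |sin phi|^(2/p-1) |cos phi|^(2/p-1) > 0\<close>. Hence \<open>Theta p\<close> is a strictly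
  increasing homeomorphism of the real line and \<open>phi p\<close> is continuous.

  With the signed power \<open>s_a(u) = |u|^a sgn u\<close> we have \<open>cos_p = s_(2/p) o cos o phi_p\<close> and
  \<open>(s_(2/p) o cos)' = - s_(2-2/p)(sin) * Theta'\<close>. L'Hopital's rule, applied to the difference
  quotients of \<open>s_(2/p) o cos\<close> and of \<open>Theta p\<close>, therefore gives
  \<open>cos_p' = - s_(2-2/p)(sin o phi_p)\<close> everywhere, including the cell endpoints where
  \<open>Theta'\<close> is \<open>0\<close> or \<open>\<infinity>\<close>; likewise for \<open>sin_p\<close>. The differential equations follow from
  \<open>s_(p-1) o s_(2/p) = s_(2-2/p)\<close>, and the conjugate form from \<open>2/q = 2 - 2/p\<close>.
\<close>

lemma DERIV_pos_imp_increasing_open_except_finite: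
  fixes f :: "real \<Rightarrow> real"
  assumes "finite S" "a < b" "continuous_on {a..b} f"
    and "\<And>x. a < x \<Longrightarrow> x < b \<Longrightarrow> x \<notin> S \<Longrightarrow> \<exists>y. DERIV f x :> y \<and> y > 0"
  shows "f a < f b"
  using assms(1-4)
proof (induction S arbitrary: a b rule: finite_induct)
  case empty
  then show ?case
    using DERIV_pos_imp_increasing_open[of a b f] by blast
next
  case (insert s S)
  note cont = insert.prems(2) and deriv = insert.prems(3)
  show ?case
  proof (cases "a < s \<and> s < b")
    case True
    have "f a < f s"
      using True deriv by (intro insert.IH continuous_on_subset[OF cont]) auto
    moreover have "f s < f b"
      using True deriv by (intro insert.IH continuous_on_subset[OF cont]) auto
    ultimately show ?thesis
      by simp
  next
    case False
    then show ?thesis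
      using insert.prems(1) cont deriv by (intro insert.IH) auto
  qed
qed

lemma has_real_derivative_comp_inverse:
  fixes T \<psi> g h T' :: "real \<Rightarrow> real"
  assumes inverse: "\<And>x. \<psi> (T x) = x" "\<And>y. T (\<psi> y) = y"
    and cont: "isCont T x0" "isCont g x0" "isCont h x0" "isCont \<psi> (T x0)"
    and deriv: "\<forall>\<^sub>F x in at x0. (T has_real_derivative T' x) (at x) \<and> T' x \<noteq> 0
                  \<and> (g has_real_derivative h x * T' x) (at x)"
  shows "((\<lambda>y. g (\<psi> y)) has_real_derivative h x0) (at (T x0))"
proof -
  have "((\<lambda>x. (g x - g x0) / (T x - T x0)) \<longlongrightarrow> h x0) (at x0)"
  proof (rule lhopital)
    show "((\<lambda>x. g x - g x0) \<longlongrightarrow> 0) (at x0)" "((\<lambda>x. T x - T x0) \<longlongrightarrow> 0) (at x0)"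
      using cont(1,2) by (simp_all add: isCont_def LIM_zero)
    show "\<forall>\<^sub>F x in at x0. T x - T x0 \<noteq> 0"
      using eventually_neq_at_within[of x0 x0 UNIV] by (rule eventually_mono) (metis inverse(1) eq_iff_diff_eq_0)
    show "\<forall>\<^sub>F x in at x0. T' x \<noteq> 0"
      "\<forall>\<^sub>F x in at x0. ((\<lambda>x. T x - T x0) has_real_derivative T' x) (at x)"
      "\<forall>\<^sub>F x in at x0. ((\<lambda>x. g x - g x0) has_real_derivative h x * T' x) (at x)"
      using deriv by (auto elim!: eventually_mono intro!: derivative_eq_intros)
    have "\<forall>\<^sub>F x in at x0. h x = h x * T' x / T' x"
      using deriv by (rule eventually_mono) simp
    with cont(3) show "((\<lambda>x. h x * T' x / T' x) \<longlongrightarrow> h x0) (at x0)"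
      unfolding isCont_def by (rule Lim_transform_eventually)
  qed
  moreover have "filterlim \<psi> (at x0) (at (T x0))"
    using cont(4) inverse unfolding filterlim_at isCont_def
    by (auto intro: eventually_mono[OF eventually_neq_at_within[of "T x0"]])
  ultimately have "((\<lambda>y. (g (\<psi> y) - g x0) / (T (\<psi> y) - T x0)) \<longlongrightarrow> h x0) (at (T x0))"
    by (rule filterlim_compose)
  then show ?thesis
    by (simp add: has_field_derivative_iff inverse)
qed

section \<open>Signed powers\<close>

definition signed_powr :: "real \<Rightarrow> real \<Rightarrow> real" where
  "signed_powr a u = \<bar>u\<bar> powr a * sgn u"

lemma signed_powr_has_real_derivative:
  assumes "u \<noteq> 0"
  shows "(signed_powr a has_real_derivative a * \<bar>u\<bar> powr (a - 1)) (at u)"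
proof (cases "u > 0")
  case True
  have "((\<lambda>u. u powr a) has_real_derivative a * \<bar>u\<bar> powr (a - 1)) (at u)"
    using has_real_derivative_powr[OF True] True by simp
  then show ?thesis
    by (rule has_field_derivative_transform_within_open[of _ _ _ "{0<..}"])
      (use True in \<open>auto simp: signed_powr_def\<close>)
next
  case False
  with assms have u: "u < 0" by auto
  have "((\<lambda>u. - ((- u) powr a)) has_real_derivative - (a * (- u) powr (a - 1) * (- 1))) (at u)"
    using u by (intro DERIV_minus DERIV_fun_powr[where r = a, simplified] derivative_intros) auto
  then have "((\<lambda>u. - ((- u) powr a)) has_real_derivative a * \<bar>u\<bar> powr (a - 1)) (at u)"
    using u by simp
  then show ?thesis
    by (rule has_field_derivative_transform_within_open[of _ _ _ "{..<0}"])
      (use u in \<open>auto simp: signed_powr_def\<close>)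
qed

lemma isCont_signed_powr:
  assumes "a > 0"
  shows "isCont (signed_powr a) u"
proof (cases "u = 0")
  case True
  have lim: "((\<lambda>v::real. \<bar>v\<bar> powr a) \<longlongrightarrow> 0) (at 0)"
    using assms by (intro tendsto_zero_powrI tendsto_rabs_zero tendsto_ident_at) auto
  have "(signed_powr a \<longlongrightarrow> 0) (at 0)"
    by (rule Lim_null_comparison[OF always_eventually lim])
      (simp add: signed_powr_def abs_mult abs_sgn_eq)
  with True show ?thesis
    by (simp add: isCont_def signed_powr_def)
next
  case False
  then show ?thesis
    using signed_powr_has_real_derivative DERIV_isCont by blast
qed

lemma signed_powr_signed_powr: "signed_powr c (signed_powr a u) = signed_powr (a * c) u"
  by (cases "u = 0") (simp_all add: signed_powr_def abs_mult sgn_mult powr_powr)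

lemma signed_powr_mult_abs_powr:
  assumes "u \<noteq> 0" "b + c = 1"
  shows "signed_powr b u * \<bar>u\<bar> powr c = u"
proof -
  have "signed_powr b u * \<bar>u\<bar> powr c = \<bar>u\<bar> powr (b + c) * sgn u"
    by (simp add: signed_powr_def powr_add)
  with assms show ?thesis
    by (simp add: abs_mult_sgn)
qed

lemma cosp_eq_signed_powr: "cosp p t = signed_powr (2 / p) (cos (phi p t))"
  by (simp add: cosp_def signed_powr_def)

lemma sinp_eq_signed_powr: "sinp p t = signed_powr (2 / p) (sin (phi p t))"
  by (simp add: sinp_def signed_powr_def)

section \<open>Quarter-period cells\<close>

lemma sin_add_int_mult_pi: "sin (x + of_int m * pi) = (-1) powi m * sin x"
  by (simp add: sin_add mult.commute[of _ pi] power_int_minus_left)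

lemma minus_one_powi_mult_sin_pos:
  assumes "of_int m * pi < y" "y < of_int (m + 1) * pi"
  shows "(-1) powi m * sin y > 0"
proof -
  have "sin (y - of_int m * pi) > 0"
    using assms by (intro sin_gt_zero) (auto simp: algebra_simps)
  moreover have "sin y = (-1) powi m * sin (y - of_int m * pi)"
    using sin_add_int_mult_pi[of "y - of_int m * pi" m] by simp
  ultimately show ?thesis
    by (simp add: power_int_minus_left)
qed

lemma sin_cos_double_sign:
  assumes "of_int m * pi / 4 < x" "x < of_int (m + 1) * pi / 4"
  shows "(-1) powi m * (sin (2 * x) * cos (2 * x)) > 0"
proof -
  have "(-1) powi m * sin (4 * x) > 0"
    using assms by (intro minus_one_powi_mult_sin_pos) (auto simp: field_simps)
  moreover have "sin (4 * x) = 2 * (sin (2 * x) * cos (2 * x))"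
    using sin_double[of "2 * x"] by simp
  ultimately show ?thesis
    by (simp add: ac_simps)
qed

lemma between_quarter_pi_if_sin_neq_0:
  assumes "sin (4 * x) \<noteq> 0"
  obtains m :: int where "of_int m * pi / 4 < x" "x < of_int (m + 1) * pi / 4"
proof
  define m where "m = \<lfloor>4 * x / pi\<rfloor>"
  have "of_int m \<le> 4 * x / pi" "4 * x / pi < of_int m + 1"
    unfolding m_def by linarith+
  moreover have "4 * x \<noteq> pi * of_int m"
    using assms by auto
  ultimately have "of_int m < 4 * x / pi"
    by (auto simp: field_simps)
  then show "of_int m * pi / 4 < x"
    by (simp add: field_simps)
  show "x < of_int (m + 1) * pi / 4"
    using \<open>4 * x / pi < of_int m + 1\<close> by (simp add: field_simps)
qed

lemma quarter_pi_cells_around: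
  fixes x :: real
  obtains l r :: int
  where "of_int l * pi / 4 < x" "x \<le> of_int (l + 1) * pi / 4"
    and "of_int r * pi / 4 \<le> x" "x < of_int (r + 1) * pi / 4"
proof
  let ?t = "4 * x / pi"
  have "4 * x \<le> of_int \<lceil>?t\<rceil> * pi"
    by (rule pos_divide_le_eq[OF pi_gt_zero, THEN iffD1]) simp
  moreover have "of_int \<lfloor>?t\<rfloor> * pi \<le> 4 * x"
    by (rule pos_le_divide_eq[OF pi_gt_zero, THEN iffD1]) simp
  ultimately show "x \<le> of_int (\<lceil>?t\<rceil> - 1 + 1) * pi / 4" "of_int \<lfloor>?t\<rfloor> * pi / 4 \<le> x"
    by (simp_all add: field_simps)
  show "of_int (\<lceil>?t\<rceil> - 1) * pi / 4 < x" "x < of_int (\<lfloor>?t\<rfloor> + 1) * pi / 4"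
    using ceiling_correct[of ?t] floor_correct[of ?t] by (simp_all add: field_simps)
qed

lemma eventually_sin_four_neq_0: "\<forall>\<^sub>F x in at x0. sin (4 * x) \<noteq> (0::real)"
proof -
  have *: "sin (4 * x) \<noteq> 0" if "of_int m * pi / 4 < x" "x < of_int (m + 1) * pi / 4" for m x
    using sin_cos_double_sign[OF that] sin_double[of "2 * x"] by auto
  obtain l r :: int
    where l: "of_int l * pi / 4 < x0" "x0 \<le> of_int (l + 1) * pi / 4"
      and r: "of_int r * pi / 4 \<le> x0" "x0 < of_int (r + 1) * pi / 4"
    by (rule quarter_pi_cells_around)
  have "\<forall>\<^sub>F x in at_left x0. sin (4 * x) \<noteq> 0"
    using eventually_at_left_real[OF l(1)]
    by (rule eventually_mono) (metis greaterThanLessThan_iff * less_le_trans l(2))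
  moreover have "\<forall>\<^sub>F x in at_right x0. sin (4 * x) \<noteq> 0"
    using eventually_at_right_real[OF r(2)]
    by (rule eventually_mono) (metis greaterThanLessThan_iff * le_less_trans r(1))
  ultimately show ?thesis
    by (simp add: eventually_at_split)
qed

lemma sin_cos_neq_0_if_sin_four_neq_0:
  fixes x :: real
  assumes "sin (4 * x) \<noteq> 0"
  shows "sin x \<noteq> 0" "cos x \<noteq> 0"
proof -
  have "sin (4 * x) = 2 * (2 * sin x * cos x) * cos (2 * x)"
    using sin_double[of "2 * x"] sin_double[of x] by simp
  with assms show "sin x \<noteq> 0" "cos x \<noteq> 0"
    by (metis mult_zero_left mult_zero_right)+
qed

section \<open>The incomplete beta function and the constant S_p\<close>

lemma incBeta_0 [simp]: "incBeta 0 a b = 0"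
  by (simp add: incBeta_def)

lemma incBeta_1:
  assumes "a > 0" "b > 0"
  shows "incBeta 1 a b = Beta a b"
  unfolding incBeta_def using has_integral_Beta_real[OF assms] by (rule integral_unique)

lemma continuous_on_incBeta:
  assumes "a > 0" "b > 0"
  shows "continuous_on {0..1} (\<lambda>x. incBeta x a b)"
  unfolding incBeta_def by (rule indefinite_integral_continuous_1[OF integrable_Beta'[OF assms]])

lemma incBeta_has_real_derivative:
  assumes "a > 0" "b > 0" "0 < x" "x < 1"
  shows "((\<lambda>x. incBeta x a b) has_real_derivative x powr (a - 1) * (1 - x) powr (b - 1)) (at x)"
proof -
  let ?f = "\<lambda>t::real. t powr (a - 1) * (1 - t) powr (b - 1)"
  have "isCont ?f x"
    using assms by (intro continuous_intros) auto
  then have "((\<lambda>u. integral {0..u} ?f) has_vector_derivative ?f x) (at x within {0..1} - {})"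
    using assms by (intro integral_has_vector_derivative_continuous_at integrable_Beta')
      (auto intro: continuous_at_imp_continuous_within)
  moreover have "at x within {0..1} = at x"
    using assms by (intro at_within_interior) auto
  ultimately show ?thesis
    by (simp add: incBeta_def has_real_derivative_iff_has_vector_derivative)
qed

lemma power2_powr: "(x\<^sup>2) powr r = \<bar>x\<bar> powr (2 * r)"
  for x :: real
proof -
  have "x\<^sup>2 = \<bar>x\<bar> powr 2"
    by simp
  then show ?thesis
    by (simp only: powr_powr)
qed

lemma incBeta_sin_square_has_real_derivative:
  assumes "a > 0" "sin (2 * x) \<noteq> 0" "cos (2 * x) \<noteq> 0"
  shows "((\<lambda>x. incBeta ((sin (2 * x))\<^sup>2) a (1 / 2)) has_real_derivative
           4 * sgn (sin (2 * x) * cos (2 * x)) * \<bar>sin (2 * x)\<bar> powr (2 * a - 1)) (at x)"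
proof -
  define s where "s = sin (2 * x)"
  define c where "c = cos (2 * x)"
  have s: "s \<noteq> 0" and c: "c \<noteq> 0" and sc: "1 - s\<^sup>2 = c\<^sup>2"
    using assms by (simp_all add: s_def c_def cos_squared_eq)
  have "0 < s\<^sup>2" "0 < c\<^sup>2"
    using s c by simp_all
  then have "0 < s\<^sup>2" "s\<^sup>2 < 1"
    using sc by linarith+
  then have "((\<lambda>y. incBeta y a (1 / 2)) has_real_derivative
               (s\<^sup>2) powr (a - 1) * (1 - s\<^sup>2) powr (1 / 2 - 1)) (at (s\<^sup>2))"
    using assms(1) by (intro incBeta_has_real_derivative) auto
  moreover have "((\<lambda>x. (sin (2 * x))\<^sup>2) has_real_derivative 2 * s * (2 * c)) (at x)"
    unfolding s_def c_def by (auto intro!: derivative_eq_intros)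
  ultimately have "((\<lambda>x. incBeta ((sin (2 * x))\<^sup>2) a (1 / 2)) has_real_derivative
      (s\<^sup>2) powr (a - 1) * (1 - s\<^sup>2) powr (1 / 2 - 1) * (2 * s * (2 * c))) (at x)"
    unfolding s_def by (rule DERIV_chain2)
  also have "(s\<^sup>2) powr (a - 1) * (1 - s\<^sup>2) powr (1 / 2 - 1) * (2 * s * (2 * c))
      = 4 * (s * c / \<bar>c\<bar>) * \<bar>s\<bar> powr (2 * a - 2)"
    by (simp add: sc power2_powr powr_minus field_simps)
  also have "s * c / \<bar>c\<bar> = sgn (s * c) * \<bar>s\<bar>"
    using c by (simp add: sgn_mult abs_mult_sgn sgn_real_def[of c] mult.commute[of "sgn s"] mult.assoc)
  also have "4 * (sgn (s * c) * \<bar>s\<bar>) * \<bar>s\<bar> powr (2 * a - 2) = 4 * sgn (s * c) * \<bar>s\<bar> powr (2 * a - 1)"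
    using powr_mult_base'[of "\<bar>s\<bar>" "2 * a - 2"] by simp
  finally show ?thesis
    by (simp add: s_def c_def)
qed

lemma Gamma_legendre_duplication_real:
  fixes a :: real
  assumes "a > 0"
  shows "Gamma a * Gamma (a + 1 / 2) = 2 powr (1 - 2 * a) * sqrt pi * Gamma (2 * a)"
proof -
  have "complex_of_real a + 1 / 2 = complex_of_real (a + 1 / 2)"
    by simp
  then have "complex_of_real a \<notin> \<int>\<^sub>\<le>\<^sub>0" "complex_of_real a + 1 / 2 \<notin> \<int>\<^sub>\<le>\<^sub>0"
    using assms by (auto simp only: of_real_in_nonpos_Ints_iff)
  then have "complex_of_real (Gamma a * Gamma (a + 1 / 2))
      = exp ((1 - 2 * of_real a) * of_real (ln 2)) * of_real (sqrt pi) * Gamma (2 * of_real a)"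
    by (simp flip: Gamma_legendre_duplication Gamma_complex_of_real)
  also have "\<dots> = complex_of_real (2 powr (1 - 2 * a) * sqrt pi * Gamma (2 * a))"
    by (simp add: powr_def flip: Gamma_complex_of_real exp_of_real)
  finally show ?thesis
    by (simp only: of_real_eq_iff)
qed

lemma Beta_one_half_eq_SS:
  assumes "p > 0"
  shows "1 / p * 4 powr (- 1 / p) * Beta (1 / p) (1 / 2) = SS p / 4"
proof -
  define a where "a = 1 / p"
  have a: "a > 0"
    using assms by (simp add: a_def)
  have pos: "Gamma a > 0" "Gamma (a + 1 / 2) > 0" "Gamma (2 * a) > 0"
    using a by auto
  have "(4::real) powr (- a) = 2 powr (- 2 * a)"
    using powr_powr[of 2 2 "- a"] by simp
  then have "2 powr (1 - 2 * a) = 2 * (4::real) powr (- a)"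
    by (simp add: powr_diff powr_minus field_simps)
  then have dup: "Gamma a * Gamma (a + 1 / 2) = 2 * 4 powr (- a) * sqrt pi * Gamma (2 * a)"
    by (simp add: Gamma_legendre_duplication_real[OF a])
  have "a * 4 powr (- a) * Beta a (1 / 2) = a * 4 powr (- a) * Gamma a ^ 2 * sqrt pi / (Gamma a * Gamma (a + 1 / 2))"
    using pos by (simp add: Beta_def Gamma_one_half_real power2_eq_square)
  also have "\<dots> = a * Gamma a ^ 2 / (2 * Gamma (2 * a))"
    unfolding dup using pos by (simp add: field_simps)
  also have "\<dots> = Gamma (1 + a) ^ 2 / Gamma (1 + 2 * a)"
  proof -
    have "a \<notin> \<int>\<^sub>\<le>\<^sub>0" "2 * a \<notin> \<int>\<^sub>\<le>\<^sub>0"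
      using a by (auto elim!: nonpos_Ints_cases)
    then show ?thesis
      using a Gamma_plus1[of a] Gamma_plus1[of "2 * a"] by (simp add: add.commute power2_eq_square)
  qed
  finally show ?thesis
    by (simp add: SS_def a_def)
qed

lemma SS_pos:
  assumes "p > 0"
  shows "SS p > 0"
proof -
  have "Gamma (1 + 1 / p) > 0" "Gamma (1 + 2 / p) > 0"
    using assms by (intro Gamma_real_pos; simp add: add_pos_pos)+
  then show ?thesis
    by (simp add: SS_def)
qed

section \<open>The angle function Theta_p and its inverse\<close>

definition Theta_branch :: "real \<Rightarrow> int \<Rightarrow> real \<Rightarrow> real" where
  "Theta_branch p k \<phi> = real_of_int (k - \<lfloor>real_of_int k / 2\<rfloor>) / 2 * SS p
     + (-1) powi k * (1 / p) * 4 powr (- 1 / p) * incBeta ((sin (2 * \<phi>))\<^sup>2) (1 / p) (1 / 2)"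

definition Theta_deriv :: "real \<Rightarrow> real \<Rightarrow> real" where
  "Theta_deriv p \<phi> = 2 / p * \<bar>sin \<phi>\<bar> powr (2 / p - 1) * \<bar>cos \<phi>\<bar> powr (2 / p - 1)"

lemma Theta_eq_Theta_branch: "Theta p \<phi> = Theta_branch p \<lfloor>4 * \<phi> / pi\<rfloor> \<phi>"
  by (simp add: Theta_def Theta_branch_def Let_def)

lemma isCont_Theta_branch:
  assumes "p > 0"
  shows "isCont (Theta_branch p k) x"
proof -
  have "continuous_on UNIV (\<lambda>x. incBeta ((sin (2 * x))\<^sup>2) (1 / p) (1 / 2))"
    using assms
    by (intro continuous_on_compose2[OF continuous_on_incBeta] continuous_intros)
      (auto simp: abs_square_le_1)
  then have "isCont (\<lambda>x. incBeta ((sin (2 * x))\<^sup>2) (1 / p) (1 / 2)) x"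
    by (simp add: continuous_on_eq_continuous_at)
  then show ?thesis
    unfolding Theta_branch_def by (intro continuous_intros)
qed

lemma Theta_deriv_double_angle:
  assumes "p > 0"
  shows "Theta_deriv p x = 4 * (1 / p * 4 powr (- 1 / p)) * \<bar>sin (2 * x)\<bar> powr (2 / p - 1)"
proof -
  have "(4::real) powr (- 1 / p) = 2 powr (- 2 / p)"
    using powr_powr[of 2 2 "- 1 / p"] by simp
  then have "4 * 4 powr (- 1 / p) * 2 powr (2 / p - 1) = (2::real)"
    by (simp add: powr_diff powr_minus field_simps)
  then show ?thesis
    by (simp add: Theta_deriv_def sin_double abs_mult powr_mult)
qed

lemma Theta_branch_has_real_derivative:
  assumes "p > 0" "of_int k * pi / 4 < x" "x < of_int (k + 1) * pi / 4"
  shows "(Theta_branch p k has_real_derivative Theta_deriv p x) (at x)"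
proof -
  let ?c = "1 / p * 4 powr (- 1 / p)"
  have sign: "(-1) powi k * (sin (2 * x) * cos (2 * x)) > 0"
    using sin_cos_double_sign[OF assms(2,3)] .
  then have "sin (2 * x) \<noteq> 0" "cos (2 * x) \<noteq> 0"
    by auto
  then have "(Theta_branch p k has_real_derivative
      (-1) powi k * ?c * (4 * sgn (sin (2 * x) * cos (2 * x)) * \<bar>sin (2 * x)\<bar> powr (2 * (1 / p) - 1))) (at x)"
    unfolding Theta_branch_def using assms(1)
    by (auto intro!: derivative_eq_intros incBeta_sin_square_has_real_derivative)
  moreover have "(-1) powi k * ?c * (4 * sgn (sin (2 * x) * cos (2 * x)) * \<bar>sin (2 * x)\<bar> powr (2 * (1 / p) - 1))
      = Theta_deriv p x"
  proof -
    have "(-1) powi k * sgn (sin (2 * x) * cos (2 * x)) = (1::real)"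
      using sign by (auto simp: power_int_minus_left sgn_if split: if_splits)
    then show ?thesis
      unfolding Theta_deriv_double_angle[OF assms(1)] by (simp add: algebra_simps)
  qed
  ultimately show ?thesis
    by simp
qed

lemma Theta_branch_consecutive:
  assumes "p > 0"
  shows "Theta_branch p (k - 1) (of_int k * pi / 4) = Theta_branch p k (of_int k * pi / 4)"
proof (cases "even k")
  case True
  then obtain j where j: "k = 2 * j"
    by (metis evenE)
  have "sin (2 * (of_int k * pi / 4)) = 0"
    using j by (simp add: mult.commute)
  moreover have "\<lfloor>real_of_int (2 * j - 1) / 2\<rfloor> = j - 1"
    by (simp add: floor_eq_iff)
  ultimately show ?thesis
    using j by (simp add: Theta_branch_def)
next
  case False
  then obtain j where j: "k = 2 * j + 1"
    by (metis oddE)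
  have arg: "2 * (of_int k * pi / 4) = pi / 2 + of_int j * pi"
    using j by (simp add: field_simps)
  have "sin (2 * (of_int k * pi / 4)) = (-1) powi j"
    using sin_add_int_mult_pi[of "pi / 2" j] unfolding arg by simp
  then have "(sin (2 * (of_int k * pi / 4)))\<^sup>2 = 1"
    by (simp add: power_int_minus_left)
  moreover have "\<lfloor>real_of_int (2 * j + 1) / 2\<rfloor> = j"
    by (simp add: floor_eq_iff)
  moreover have "1 / p * 4 powr (- 1 / p) * incBeta 1 (1 / p) (1 / 2) = SS p / 4"
    using Beta_one_half_eq_SS[OF assms] assms by (simp add: incBeta_1)
  ultimately show ?thesis
    using j by (simp add: Theta_branch_def field_simps)
qed

lemma Theta_eq_Theta_branch_on:
  assumes "p > 0" "of_int k * pi / 4 \<le> x" "x \<le> of_int (k + 1) * pi / 4"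
  shows "Theta p x = Theta_branch p k x"
proof (cases "x = of_int (k + 1) * pi / 4")
  case True
  then have "4 * x / pi = of_int (k + 1)"
    unfolding True by simp
  then have "\<lfloor>4 * x / pi\<rfloor> = k + 1"
    by (simp only: floor_of_int)
  then have "Theta p x = Theta_branch p (k + 1) x"
    by (simp add: Theta_eq_Theta_branch)
  also have "\<dots> = Theta_branch p k x"
    using Theta_branch_consecutive[OF assms(1), of "k + 1"] unfolding True by simp
  finally show ?thesis .
next
  case False
  with assms(2,3) have "of_int k \<le> 4 * x / pi" "4 * x / pi < of_int k + 1"
    by (auto simp: field_simps)
  then have "\<lfloor>4 * x / pi\<rfloor> = k"
    by (simp add: floor_eq_iff)
  then show ?thesis
    by (simp add: Theta_eq_Theta_branch)
qed

lemma isCont_Theta: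
  assumes "p > 0"
  shows "isCont (Theta p) x"
proof -
  have piece: "continuous (at x within S) (Theta p)"
    if "\<forall>\<^sub>F y in at x within S. y \<in> {of_int k * pi / 4 .. of_int (k + 1) * pi / 4}"
      "x \<in> {of_int k * pi / 4 .. of_int (k + 1) * pi / 4}" for S k
  proof -
    have "\<forall>\<^sub>F y in at x within S. Theta p y = Theta_branch p k y"
      using that(1) by (rule eventually_mono) (use assms Theta_eq_Theta_branch_on in auto)
    moreover have "Theta p x = Theta_branch p k x"
      using that(2) assms Theta_eq_Theta_branch_on by auto
    ultimately show ?thesis
      using continuous_at_within_cong isCont_Theta_branch[OF assms]
      by (metis continuous_at_imp_continuous_within)
  qed
  obtain l r :: int
    where l: "of_int l * pi / 4 < x" "x \<le> of_int (l + 1) * pi / 4"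
      and r: "of_int r * pi / 4 \<le> x" "x < of_int (r + 1) * pi / 4"
    by (rule quarter_pi_cells_around)
  have "continuous (at_left x) (Theta p)"
    using eventually_at_left_real[OF l(1)] l by (intro piece[where k = l]) (auto elim!: eventually_mono)
  moreover have "continuous (at_right x) (Theta p)"
    using eventually_at_right_real[OF r(2)] r by (intro piece[where k = r]) (auto elim!: eventually_mono)
  ultimately show ?thesis
    by (simp add: continuous_at_split)
qed

lemma Theta_has_real_derivative:
  assumes "p > 0" "sin (4 * x) \<noteq> 0"
  shows "(Theta p has_real_derivative Theta_deriv p x) (at x)"
proof -
  obtain k where k: "of_int k * pi / 4 < x" "x < of_int (k + 1) * pi / 4"
    using between_quarter_pi_if_sin_neq_0[OF assms(2)] .
  show ?thesis
  proof (rule has_field_derivative_transform_within_open)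
    show "(Theta_branch p k has_real_derivative Theta_deriv p x) (at x)"
      using assms(1) k by (rule Theta_branch_has_real_derivative)
    show "Theta_branch p k y = Theta p y" if "y \<in> {of_int k * pi / 4 <..< of_int (k + 1) * pi / 4}" for y
      using that Theta_eq_Theta_branch_on[OF assms(1), of k y] by simp
  qed (use k in auto)
qed

lemma Theta_deriv_pos:
  assumes "p > 0" "sin (4 * x) \<noteq> 0"
  shows "Theta_deriv p x > 0"
  using assms sin_cos_neq_0_if_sin_four_neq_0[OF assms(2)]
  unfolding Theta_deriv_def by (intro mult_pos_pos) auto

lemma strict_mono_Theta:
  assumes "p > 0"
  shows "strict_mono (Theta p)"
proof (rule strict_monoI)
  fix a b :: real
  assume "a < b"
  let ?S = "{x \<in> {a..b}. sin (4 * x) = 0}"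
  have "?S \<subseteq> (\<lambda>i. of_int i * pi / 4) ` {\<lceil>4 * a / pi\<rceil>..\<lfloor>4 * b / pi\<rfloor>}"
  proof
    fix x
    assume x: "x \<in> ?S"
    then obtain i :: int where i: "4 * x = of_int i * pi"
      by (auto simp: sin_zero_iff_int2)
    then have "4 * a / pi \<le> of_int i" "of_int i \<le> 4 * b / pi"
      using x by (auto simp: field_simps)
    then show "x \<in> (\<lambda>i. of_int i * pi / 4) ` {\<lceil>4 * a / pi\<rceil>..\<lfloor>4 * b / pi\<rfloor>}"
      using i by (intro image_eqI[of _ _ i]) (auto simp: ceiling_le_iff le_floor_iff)
  qed
  then have "finite ?S"
    by (rule finite_subset) simp
  then show "Theta p a < Theta p b"
  proof (rule DERIV_pos_imp_increasing_open_except_finite[OF _ \<open>a < b\<close>])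
    show "continuous_on {a..b} (Theta p)"
      using isCont_Theta[OF assms] by (intro continuous_at_imp_continuous_on) auto
    fix x
    assume "a < x" "x < b" "x \<notin> ?S"
    then have "sin (4 * x) \<noteq> 0"
      by auto
    then show "\<exists>y. DERIV (Theta p) x :> y \<and> y > 0"
      using Theta_has_real_derivative[OF assms] Theta_deriv_pos[OF assms] by blast
  qed
qed

lemma Theta_of_int_mult_half_pi: "Theta p (of_int j * pi / 2) = of_int j * SS p / 2"
proof -
  have "4 * (of_int j * pi / 2) / pi = of_int (2 * j)"
    by simp
  then have "\<lfloor>4 * (of_int j * pi / 2) / pi\<rfloor> = 2 * j"
    by (simp only: floor_of_int)
  moreover have "sin (2 * (of_int j * pi / 2)) = 0"
    by (simp add: mult.commute)
  ultimately show ?thesis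
    by (simp add: Theta_eq_Theta_branch Theta_branch_def)
qed

lemma surj_Theta:
  assumes "p > 0"
  shows "surj (Theta p)"
proof (rule surjI)
  fix y
  define j where "j = \<lfloor>2 * y / SS p\<rfloor>"
  have "of_int j \<le> 2 * y / SS p" "2 * y / SS p < of_int j + 1"
    unfolding j_def by linarith+
  then have "of_int j * SS p / 2 \<le> y" "y \<le> of_int (j + 1) * SS p / 2"
    using SS_pos[OF assms] by (auto simp: field_simps)
  then have "Theta p (of_int j * pi / 2) \<le> y" "y \<le> Theta p (of_int (j + 1) * pi / 2)"
    by (simp_all only: Theta_of_int_mult_half_pi)
  moreover have "of_int j * pi / 2 \<le> of_int (j + 1) * pi / 2"
    by (simp add: field_simps)
  ultimately obtain x where "Theta p x = y"
    using IVT[of "Theta p"] isCont_Theta[OF assms] by blast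
  then show "Theta p (inv (Theta p) y) = y"
    by (metis f_inv_into_f rangeI)
qed

lemma phi_Theta:
  assumes "p > 0"
  shows "phi p (Theta p x) = x"
  using strict_mono_imp_inj_on[OF strict_mono_Theta[OF assms]] by (simp add: phi_def)

lemma Theta_phi:
  assumes "p > 0"
  shows "Theta p (phi p y) = y"
  using surj_Theta[OF assms] by (simp add: phi_def surj_f_inv_f)

lemma isCont_phi:
  assumes "p > 0"
  shows "isCont (phi p) y"
  using isCont_inverse_function[of 1 "phi p y" "phi p" "Theta p"] Theta_phi[OF assms, of y]
    phi_Theta[OF assms] isCont_Theta[OF assms] by simp

section \<open>Derivatives of cos_p and sin_p\<close>

lemma comp_phi_has_real_derivative:
  assumes "p > 0" "\<And>x. isCont g x" "isCont h (phi p t)"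
    and "\<And>x. sin (4 * x) \<noteq> 0 \<Longrightarrow> (g has_real_derivative h x * Theta_deriv p x) (at x)"
  shows "((\<lambda>t. g (phi p t)) has_real_derivative h (phi p t)) (at t)"
proof -
  have "\<forall>\<^sub>F x in at (phi p t). (Theta p has_real_derivative Theta_deriv p x) (at x)
          \<and> Theta_deriv p x \<noteq> 0 \<and> (g has_real_derivative h x * Theta_deriv p x) (at x)"
    using eventually_sin_four_neq_0[of "phi p t"]
    by (rule eventually_mono)
      (metis assms(1,4) Theta_has_real_derivative Theta_deriv_pos less_irrefl)
  then have "((\<lambda>y. g (phi p y)) has_real_derivative h (phi p t)) (at (Theta p (phi p t)))"
    using assms(1-3) by (intro has_real_derivative_comp_inverse phi_Theta Theta_phi isCont_Theta isCont_phi)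
  then show ?thesis
    by (simp add: Theta_phi[OF assms(1)])
qed

lemma cosp_has_real_derivative:
  assumes "p > 1"
  shows "(cosp p has_real_derivative - signed_powr (2 - 2 / p) (sin (phi p t))) (at t)"
proof -
  have p: "p > 0"
    using assms by simp
  have "((\<lambda>t. signed_powr (2 / p) (cos (phi p t))) has_real_derivative
          - signed_powr (2 - 2 / p) (sin (phi p t))) (at t)"
  proof (rule comp_phi_has_real_derivative[OF p])
    show "isCont (\<lambda>x. signed_powr (2 / p) (cos x)) x" for x
      using p by (intro continuous_intros isCont_o2[OF _ isCont_signed_powr]) auto
    show "isCont (\<lambda>x. - signed_powr (2 - 2 / p) (sin x)) (phi p t)"
      using assms by (intro continuous_intros isCont_o2[OF _ isCont_signed_powr]) (auto simp: field_simps)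
    fix x :: real
    assume "sin (4 * x) \<noteq> 0"
    note sc = sin_cos_neq_0_if_sin_four_neq_0[OF this]
    have "((\<lambda>x. signed_powr (2 / p) (cos x)) has_real_derivative
            2 / p * \<bar>cos x\<bar> powr (2 / p - 1) * - sin x) (at x)"
      using sc by (intro DERIV_chain2[OF signed_powr_has_real_derivative] derivative_eq_intros) auto
    moreover have "- signed_powr (2 - 2 / p) (sin x) * Theta_deriv p x
        = 2 / p * \<bar>cos x\<bar> powr (2 / p - 1) * - (signed_powr (2 - 2 / p) (sin x) * \<bar>sin x\<bar> powr (2 / p - 1))"
      by (simp add: Theta_deriv_def ac_simps)
    moreover have "signed_powr (2 - 2 / p) (sin x) * \<bar>sin x\<bar> powr (2 / p - 1) = sin x"
      using sc by (intro signed_powr_mult_abs_powr) auto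
    ultimately show "((\<lambda>x. signed_powr (2 / p) (cos x)) has_real_derivative
            - signed_powr (2 - 2 / p) (sin x) * Theta_deriv p x) (at x)"
      by simp
  qed
  then show ?thesis
    by (simp add: cosp_eq_signed_powr[abs_def])
qed

lemma sinp_has_real_derivative:
  assumes "p > 1"
  shows "(sinp p has_real_derivative signed_powr (2 - 2 / p) (cos (phi p t))) (at t)"
proof -
  have p: "p > 0"
    using assms by simp
  have "((\<lambda>t. signed_powr (2 / p) (sin (phi p t))) has_real_derivative
          signed_powr (2 - 2 / p) (cos (phi p t))) (at t)"
  proof (rule comp_phi_has_real_derivative[OF p])
    show "isCont (\<lambda>x. signed_powr (2 / p) (sin x)) x" for x
      using p by (intro continuous_intros isCont_o2[OF _ isCont_signed_powr]) auto
    show "isCont (\<lambda>x. signed_powr (2 - 2 / p) (cos x)) (phi p t)"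
      using assms by (intro continuous_intros isCont_o2[OF _ isCont_signed_powr]) (auto simp: field_simps)
    fix x :: real
    assume "sin (4 * x) \<noteq> 0"
    note sc = sin_cos_neq_0_if_sin_four_neq_0[OF this]
    have "((\<lambda>x. signed_powr (2 / p) (sin x)) has_real_derivative
            2 / p * \<bar>sin x\<bar> powr (2 / p - 1) * cos x) (at x)"
      using sc by (intro DERIV_chain2[OF signed_powr_has_real_derivative] derivative_eq_intros) auto
    moreover have "signed_powr (2 - 2 / p) (cos x) * Theta_deriv p x
        = 2 / p * \<bar>sin x\<bar> powr (2 / p - 1) * (signed_powr (2 - 2 / p) (cos x) * \<bar>cos x\<bar> powr (2 / p - 1))"
      by (simp add: Theta_deriv_def ac_simps)
    moreover have "signed_powr (2 - 2 / p) (cos x) * \<bar>cos x\<bar> powr (2 / p - 1) = cos x"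
      using sc by (intro signed_powr_mult_abs_powr) auto
    ultimately show "((\<lambda>x. signed_powr (2 / p) (sin x)) has_real_derivative
            signed_powr (2 - 2 / p) (cos x) * Theta_deriv p x) (at x)"
      by simp
  qed
  then show ?thesis
    by (simp add: sinp_eq_signed_powr[abs_def])
qed

lemma conjugate_exponent:
  fixes p q :: real
  assumes "p > 1" "p * q = p + q"
  shows "q > 0" "2 / q = 2 - 2 / p"
proof -
  have q: "q = p / (p - 1)"
    using assms by (simp add: field_simps)
  show "q > 0" "2 / q = 2 - 2 / p"
    unfolding q using assms(1) by (simp_all add: field_simps)
qed

theorem mainTheorem7:
  fixes p :: real
  assumes "1 < p"
  shows "(\<forall>\<theta>. (cosp p has_real_derivative
              - (\<bar>sinp p \<theta>\<bar> powr (p - 1) * sgn (sinp p \<theta>))) (at \<theta>))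
       \<and> (\<forall>\<theta>. (sinp p has_real_derivative
              \<bar>cosp p \<theta>\<bar> powr (p - 1) * sgn (cosp p \<theta>)) (at \<theta>))
       \<and> cosp p 0 = 1 \<and> sinp p 0 = 0
       \<and> (\<forall>q::real. p * q = p + q \<longrightarrow>
            (\<forall>\<theta>. (cosp p has_real_derivative - sinp q (Theta q (phi p \<theta>))) (at \<theta>)
                \<and> (sinp p has_real_derivative cosp q (Theta q (phi p \<theta>))) (at \<theta>)))"
proof -
  have p: "p > 0" and exponent: "2 / p * (p - 1) = 2 - 2 / p"
    using assms by (simp_all add: field_simps)
  have "signed_powr (p - 1) (signed_powr (2 / p) u) = signed_powr (2 - 2 / p) u" for u
    unfolding signed_powr_signed_powr exponent ..
  then have derivative_values:
    "\<bar>cosp p t\<bar> powr (p - 1) * sgn (cosp p t) = signed_powr (2 - 2 / p) (cos (phi p t))"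
    "\<bar>sinp p t\<bar> powr (p - 1) * sgn (sinp p t) = signed_powr (2 - 2 / p) (sin (phi p t))" for t
    by (simp_all add: cosp_eq_signed_powr sinp_eq_signed_powr signed_powr_def[of "p - 1"])
  have "phi p 0 = 0"
    using phi_Theta[OF p, of 0] Theta_of_int_mult_half_pi[of p 0] by simp
  then have "cosp p 0 = 1" "sinp p 0 = 0"
    by (simp_all add: cosp_def sinp_def)
  moreover have "cosp q (Theta q (phi p t)) = signed_powr (2 - 2 / p) (cos (phi p t))"
    "sinp q (Theta q (phi p t)) = signed_powr (2 - 2 / p) (sin (phi p t))"
    if "p * q = p + q" for q t
    using conjugate_exponent[OF assms that]
    by (simp_all add: cosp_eq_signed_powr sinp_eq_signed_powr phi_Theta)
  ultimately show ?thesis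
    using cosp_has_real_derivative[OF assms] sinp_has_real_derivative[OF assms]
    by (simp add: derivative_values)
qed

end
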